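(* There exists an algorithm which, given {\sf NACOND} access to an unknown distribution $p$ on $[n]$, an explicit description of a distribution $q$ on $[n]$, and a parameter $\varepsilon\in(0,1]$, makes $\tilde O\left(\frac{\log^2 n}{\varepsilon^2}\right)$ queries to the oracle on $p$ and distinguishes between the cases $p = q$ and $d_{\mathrm{TV}}(p,q) \geq \varepsilon$ with probability at least $2/3$.
   Context: Distributions are over the finite domain $[n]=\{1,\dots,n\}$; for $S\subseteq[n]$, $p(S)=\sum_{i\in S}p(i)$. A conditional sampling oracle for $p$ takes as input a query set $S\subseteq[n]$ and returns a symbol $i\in S$ drawn with probability $p(i)/p(S)$; if $p(S)=0$ it returns a uniformly random element of $S$. In the non-adaptive model ({\sf NACOND}), the algorithm must specify all of its query sets (possibly using its own randomness) before seeing the result of any query. Total variation distance: $d_{\mathrm{TV}}(p,q)=\frac12\sum_{i\in[n]}|p(i)-q(i)|$. $\log$ is base 2; $\tilde O(\cdot)$ hides factors polylogarithmic in its argument (e.g. factors polynomial in $\log\log n$ and $\log(1/\varepsilon)$). *)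

theory Defs
  imports "HOL-Probability.Probability"
begin

definition is_dist_on :: "nat \<Rightarrow> nat pmf \<Rightarrow> bool" where
  "is_dist_on n p \<longleftrightarrow> set_pmf p \<subseteq> {1..n}"

definition dTV :: "nat \<Rightarrow> nat pmf \<Rightarrow> nat pmf \<Rightarrow> real" where
  "dTV n p q = (1/2) * (\<Sum>i\<in>{1..n}. \<bar>pmf p i - pmf q i\<bar>)"

definition cond_oracle :: "nat pmf \<Rightarrow> nat set \<Rightarrow> nat pmf" where
  "cond_oracle p S = (if measure_pmf.prob p S = 0 then pmf_of_set S else cond_pmf p S)"

fun answers :: "nat pmf \<Rightarrow> nat set list \<Rightarrow> nat list pmf" where
  "answers p [] = return_pmf []"
| "answers p (S # Ss) =
     bind_pmf (cond_oracle p S) (\<lambda>x. map_pmf (\<lambda>xs. x # xs) (answers p Ss))"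

text \<open>A NACOND algorithm, on inputs (n, q, eps), draws (using its own randomness)
  a list of query sets together with a decision function of the answers, all before
  seeing any answer. Output True means "accept: p = q".\<close>
type_synonym nacond_alg = "nat \<Rightarrow> nat pmf \<Rightarrow> real \<Rightarrow> (nat set list \<times> (nat list \<Rightarrow> bool)) pmf"

definition run_alg :: "nacond_alg \<Rightarrow> nat \<Rightarrow> nat pmf \<Rightarrow> real \<Rightarrow> nat pmf \<Rightarrow> bool pmf" where
  "run_alg A n q eps p =
     bind_pmf (A n q eps) (\<lambda>(Qs, dec). map_pmf dec (answers p Qs))"

text \<open>Query budget O~(log^2 n / eps^2): C * L * (1 + ln(1+L))^k with L = log^2 n / eps^2
  (log n replaced by log (n+1) so that the bound is positive for n = 1).\<close>
definition query_bound :: "real \<Rightarrow> nat \<Rightarrow> nat \<Rightarrow> real \<Rightarrow> real" where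
  "query_bound C k n eps =
     (let L = (log 2 (real n + 1))^2 / eps^2 in C * L * (1 + ln (1 + L)) ^ k)"

end

(*
  Split [n] dyadically into a binary tree of depth d ~ log n. Telescoping along the path from
  the root to a leaf y bounds |p(y) - q(y)| by the differences between p and q in the conditional
  probabilities of stepping from each block on the path to its child containing y (the branch gaps),
  so d_TV(p, q) is at most d times the average branch gap at a random level t and a point x ~ q.
  A branch gap is the difference of two numbers, one known from q and one estimable by conditional
  queries to the block, so it can be tested non-adaptively. If p is eps-far the average gap is at
  least eps/d, hence by bucketing there is a scale j at which gaps >= 2^-j carry q-mass of order
  2^j eps / (d log(d/eps)); about 2^-j d log(d/eps) / eps random tests at that scale, each using
  4^j log(d/eps) samples, find one with constant probability. Over all scales this is
  O~(d^2 / eps^2) queries, and when p = q all tests pass by Hoeffding and a union bound.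
*)

theory Submission
  imports Defs "HOL-Analysis.Harmonic_Numbers"
begin

lemma integral_bind_pmf_bounded:
  fixes f :: "'b \<Rightarrow> real"
  assumes "\<And>x. \<bar>f x\<bar> \<le> B"
  shows "(\<integral>x. f x \<partial>bind_pmf M N) = (\<integral>x. (\<integral>y. f y \<partial>N x) \<partial>M)"
  unfolding measure_pmf_bind
  by (rule integral_bind[where K = "count_space UNIV" and B = B and B' = 1])
     (use assms in \<open>auto simp: measure_pmf_in_subprob_algebra\<close>)

lemma integrable_measure_pmf_bounded:
  fixes f :: "'b \<Rightarrow> real"
  assumes "\<And>x. \<bar>f x\<bar> \<le> B"
  shows "integrable (measure_pmf M) f"
  by (rule measure_pmf.integrable_const_bound[where B = B]) (use assms in auto)

lemma replicate_pmf_map_pmf: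
  "replicate_pmf k (map_pmf f D) = map_pmf (map f) (replicate_pmf k D)"
  by (induction k) (simp_all add: map_pmf_def bind_assoc_pmf bind_return_pmf)

lemma map_pmf_eq_bernoulli_pmf:
  "map_pmf P D = bernoulli_pmf (measure_pmf.prob D {x. P x})"
proof (rule pmf_eqI)
  fix b :: bool
  have "measure_pmf.prob D {x. \<not> P x} = 1 - measure_pmf.prob D {x. P x}"
    using measure_pmf.prob_compl[of "{x. P x}" D] by (simp add: Compl_eq_Diff_UNIV[symmetric] Collect_neg_eq)
  then show "pmf (map_pmf P D) b = pmf (bernoulli_pmf (measure_pmf.prob D {x. P x})) b"
    by (cases b) (auto simp: pmf_map vimage_def)
qed

lemma count_replicate_pmf:
  "map_pmf (\<lambda>xs. length (filter P xs)) (replicate_pmf k D)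
     = binomial_pmf k (measure_pmf.prob D {x. P x})"
  by (simp add: binomial_pmf_altdef map_pmf_eq_bernoulli_pmf[symmetric] replicate_pmf_map_pmf
      pmf.map_comp o_def filter_map)

section \<open>The conditional sampling oracle\<close>

lemma pmf_cond_oracle:
  assumes "finite S" "S \<noteq> {}"
  shows "pmf (cond_oracle p S) y =
    (if y \<notin> S then 0
     else if measure_pmf.prob p S = 0 then 1 / real (card S)
     else pmf p y / measure_pmf.prob p S)"
proof (cases "measure_pmf.prob p S = 0")
  case True
  then show ?thesis using assms by (simp add: cond_oracle_def indicator_def)
next
  case False
  then have "set_pmf p \<inter> S \<noteq> {}" by (simp add: measure_pmf_zero_iff)
  then show ?thesis using False by (simp add: cond_oracle_def pmf_cond)
qed

lemma measure_cond_oracle: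
  assumes "finite S" "A \<subseteq> S" "S \<noteq> {}"
  shows "measure_pmf.prob (cond_oracle p S) A =
    (if measure_pmf.prob p S = 0 then real (card A) / real (card S)
     else measure_pmf.prob p A / measure_pmf.prob p S)"
proof -
  have "finite A" using assms finite_subset by blast
  then show ?thesis
    using assms by (auto simp: measure_measure_pmf_finite pmf_cond_oracle sum_divide_distrib subsetD)
qed

lemma set_pmf_cond_oracle:
  assumes "finite S" "S \<noteq> {}"
  shows "set_pmf (cond_oracle p S) \<subseteq> S"
  using assms by (auto simp: set_pmf_eq pmf_cond_oracle)

lemma measure_cond_oracle_self:
  assumes "finite S" "S \<noteq> {}"
  shows "measure_pmf.prob (cond_oracle p S) S = 1"
  using set_pmf_cond_oracle[OF assms] by (auto simp: measure_pmf.prob_eq_1 AE_measure_pmf_iff)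

lemma measure_cond_oracle_Diff:
  assumes "finite S" "S \<noteq> {}" "A \<subseteq> S"
  shows "measure_pmf.prob (cond_oracle p S) (S - A) = 1 - measure_pmf.prob (cond_oracle p S) A"
  using assms measure_cond_oracle_self[OF assms(1,2)]
  by (subst measure_pmf.finite_measure_Diff) auto

text \<open>Conditioning on a set and then on a subset is conditioning on the subset; this also
  holds in the degenerate cases thanks to the uniform fallback of the oracle.\<close>
lemma pmf_cond_oracle_nested:
  assumes "finite S" "A \<subseteq> S" "y \<in> A"
  shows "pmf (cond_oracle p S) y = measure_pmf.prob (cond_oracle p S) A * pmf (cond_oracle p A) y"
proof -
  have ne: "A \<noteq> {}" "S \<noteq> {}" and fin: "finite A"
    using assms finite_subset by auto
  consider "measure_pmf.prob p S = 0" | "measure_pmf.prob p A = 0" "pmf p y = 0"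
    | "measure_pmf.prob p A \<noteq> 0" "measure_pmf.prob p S \<noteq> 0"
  proof (cases "measure_pmf.prob p A = 0")
    case True
    have "pmf p y \<le> measure_pmf.prob p A"
      using assms measure_pmf.finite_measure_mono[of "{y}" A p] by (simp add: measure_pmf_single)
    with True that show ?thesis by (simp add: order_antisym)
  qed auto
  then show ?thesis
  proof cases
    case 1
    moreover have "measure_pmf.prob p A \<le> measure_pmf.prob p S"
      using assms by (intro measure_pmf.finite_measure_mono) auto
    ultimately have "measure_pmf.prob p A = 0"
      using measure_nonneg[of p A] by linarith
    with 1 show ?thesis
      using assms ne fin card_gt_0_iff[of A] by (simp add: pmf_cond_oracle measure_cond_oracle subsetD)
  qed (use assms ne fin in \<open>simp_all add: pmf_cond_oracle measure_cond_oracle subsetD\<close>)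
qed

lemma measure_pmf_eq_cond_oracle:
  assumes "finite S" "A \<subseteq> S" "A \<noteq> {}"
  shows "measure_pmf.prob p A = measure_pmf.prob p S * measure_pmf.prob (cond_oracle p S) A"
proof (cases "measure_pmf.prob p S = 0")
  case True
  moreover have "measure_pmf.prob p A \<le> measure_pmf.prob p S"
    using assms by (intro measure_pmf.finite_measure_mono) auto
  ultimately show ?thesis using measure_nonneg[of p A] by simp
next
  case False
  moreover have "S \<noteq> {}" using assms by auto
  ultimately show ?thesis using assms by (simp add: measure_cond_oracle)
qed

lemma answers_append:
  "answers p (Ss @ Ts) = bind_pmf (answers p Ss) (\<lambda>xs. map_pmf (\<lambda>ys. xs @ ys) (answers p Ts))"
  by (induction Ss) (simp_all add: bind_assoc_pmf map_pmf_def bind_return_pmf bind_return_pmf')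

lemma answers_replicate: "answers p (replicate k S) = replicate_pmf k (cond_oracle p S)"
  by (induction k) (simp_all add: map_pmf_def)

lemma length_answers: "xs \<in> set_pmf (answers p Ss) \<Longrightarrow> length xs = length Ss"
  by (induction Ss arbitrary: xs) auto

section \<open>The dyadic tree and the branch gaps\<close>

text \<open>\<open>dyadic_block n d t y\<close>, written \<open>N_t y\<close> below, is the block at level \<open>t\<close> containing \<open>y\<close> of
  the binary tree of depth \<open>d\<close> over \<open>[n]\<close>: the points \<open>z\<close> such that \<open>z - 1\<close> and \<open>y - 1\<close> agree in
  their leading \<open>t\<close> of \<open>d\<close> binary digits.\<close>
definition dyadic_block :: "nat \<Rightarrow> nat \<Rightarrow> nat \<Rightarrow> nat \<Rightarrow> nat set" where
  "dyadic_block n d t y = {z \<in> {1..n}. (z - 1) div 2 ^ (d - t) = (y - 1) div 2 ^ (d - t)}"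

lemma finite_dyadic_block [simp]: "finite (dyadic_block n d t y)"
  and dyadic_block_subset: "dyadic_block n d t y \<subseteq> {1..n}"
  by (auto simp: dyadic_block_def)

lemma dyadic_block_self: "y \<in> {1..n} \<Longrightarrow> y \<in> dyadic_block n d t y"
  by (auto simp: dyadic_block_def)

lemma dyadic_block_nonempty: "y \<in> {1..n} \<Longrightarrow> dyadic_block n d t y \<noteq> {}"
  using dyadic_block_self by blast

lemma dyadic_block_eq: "z \<in> dyadic_block n d t y \<Longrightarrow> dyadic_block n d t z = dyadic_block n d t y"
  by (auto simp: dyadic_block_def)

lemma dyadic_block_root:
  assumes "n \<le> 2 ^ d" "y \<in> {1..n}"
  shows "dyadic_block n d 0 y = {1..n}"
  using assms by (auto simp: dyadic_block_def)

lemma dyadic_block_leaf: "y \<in> {1..n} \<Longrightarrow> dyadic_block n d d y = {y}"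
  by (auto simp: dyadic_block_def)

lemma div_two_power_diff_Suc:
  "t < d \<Longrightarrow> (a::nat) div 2 ^ (d - t) = a div 2 ^ (d - Suc t) div 2"
proof -
  assume "t < d"
  then have "d - t = Suc (d - Suc t)" by simp
  then show ?thesis by (simp add: div_mult2_eq[symmetric] mult.commute)
qed

lemma dyadic_block_Suc_subset:
  "t < d \<Longrightarrow> dyadic_block n d (Suc t) y \<subseteq> dyadic_block n d t y"
  by (auto simp: dyadic_block_def div_two_power_diff_Suc)

lemma dyadic_block_sibling:
  assumes "t < d" "z \<in> dyadic_block n d t x - dyadic_block n d (Suc t) x"
  shows "dyadic_block n d (Suc t) z = dyadic_block n d t x - dyadic_block n d (Suc t) x"
proof -
  define K :: nat where "K = 2 ^ (d - Suc t)"
  have sibling: "A = Z \<longleftrightarrow> A div 2 = X div 2 \<and> A \<noteq> X"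
    if "Z div 2 = X div 2" "Z \<noteq> X" for A Z X :: nat
    using that by linarith
  have z: "z \<in> {1..n}" "(z - 1) div K div 2 = (x - 1) div K div 2" "(z - 1) div K \<noteq> (x - 1) div K"
    using assms unfolding dyadic_block_def div_two_power_diff_Suc[OF assms(1)] K_def[symmetric] by auto
  show ?thesis
    unfolding dyadic_block_def div_two_power_diff_Suc[OF assms(1)] K_def[symmetric]
    using sibling[OF z(2,3)] z(1) by auto
qed

lemma measure_pmf_dist_on:
  "is_dist_on n p \<Longrightarrow> measure_pmf.prob p {1..n} = 1"
  by (auto simp: is_dist_on_def measure_pmf.prob_eq_1 AE_measure_pmf_iff)

definition branch_gap :: "nat \<Rightarrow> nat \<Rightarrow> nat pmf \<Rightarrow> nat pmf \<Rightarrow> nat \<Rightarrow> nat \<Rightarrow> real" where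
  "branch_gap n d p q t x =
     \<bar>measure_pmf.prob (cond_oracle p (dyadic_block n d t x)) (dyadic_block n d (Suc t) x)
      - measure_pmf.prob (cond_oracle q (dyadic_block n d t x)) (dyadic_block n d (Suc t) x)\<bar>"

lemma branch_gap_bounds: "0 \<le> branch_gap n d p q t x" "branch_gap n d p q t x \<le> 1"
  unfolding branch_gap_def by (smt (verit) measure_nonneg measure_pmf.prob_le_1)+

text \<open>The interpolants \<open>q(N_t y) p(y | N_t y)\<close> run from \<open>p(y)\<close> at the root to \<open>q(y)\<close> at the
  leaf, and consecutive ones differ by a single branch gap.\<close>
lemma abs_pmf_diff_le_branch_gaps:
  assumes p: "is_dist_on n p" and q: "is_dist_on n q" and nd: "n \<le> 2 ^ d" and y: "y \<in> {1..n}"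
  shows "\<bar>pmf p y - pmf q y\<bar> \<le> (\<Sum>t<d. measure_pmf.prob q (dyadic_block n d t y)
           * pmf (cond_oracle p (dyadic_block n d (Suc t) y)) y * branch_gap n d p q t y)"
proof -
  define H where "H t = measure_pmf.prob q (dyadic_block n d t y) * pmf (cond_oracle p (dyadic_block n d t y)) y" for t
  have "H 0 = pmf p y"
    using measure_pmf_dist_on[OF p] measure_pmf_dist_on[OF q] y
    by (simp add: H_def dyadic_block_root[OF nd y] pmf_cond_oracle)
  moreover have "H d = pmf q y"
    using y by (cases "pmf p y = 0") (simp_all add: H_def dyadic_block_leaf pmf_cond_oracle measure_pmf_single)
  moreover have "\<bar>H t - H (Suc t)\<bar> = measure_pmf.prob q (dyadic_block n d t y)
      * pmf (cond_oracle p (dyadic_block n d (Suc t) y)) y * branch_gap n d p q t y"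
    if t: "t < d" for t
  proof -
    let ?v = "dyadic_block n d t y" and ?c = "dyadic_block n d (Suc t) y"
    have cv: "?c \<subseteq> ?v" and yc: "y \<in> ?c"
      using dyadic_block_Suc_subset[OF t] dyadic_block_self[OF y] by auto
    have "H t = measure_pmf.prob q ?v * measure_pmf.prob (cond_oracle p ?v) ?c * pmf (cond_oracle p ?c) y"
      unfolding H_def using pmf_cond_oracle_nested[OF finite_dyadic_block cv yc] by simp
    moreover have "H (Suc t) = measure_pmf.prob q ?v * measure_pmf.prob (cond_oracle q ?v) ?c * pmf (cond_oracle p ?c) y"
      unfolding H_def using measure_pmf_eq_cond_oracle[OF finite_dyadic_block cv, of q] yc by auto
    ultimately show ?thesis
      by (simp add: branch_gap_def abs_mult left_diff_distrib[symmetric] right_diff_distrib[symmetric] mult_ac)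
  qed
  ultimately show ?thesis
    using sum_abs[of "\<lambda>t. H t - H (Suc t)" "{..<d}"] by (simp add: sum_lessThan_telescope')
qed

lemma branch_gap_eq:
  assumes t: "t < d" and x: "x \<in> {1..n}" and y: "y \<in> dyadic_block n d t x"
  shows "branch_gap n d p q t y = branch_gap n d p q t x"
proof (cases "y \<in> dyadic_block n d (Suc t) x")
  case True
  then show ?thesis
    using dyadic_block_eq[OF True] dyadic_block_eq[OF y] by (simp add: branch_gap_def)
next
  case False
  let ?v = "dyadic_block n d t x" and ?c = "dyadic_block n d (Suc t) x"
  have "dyadic_block n d t y = ?v" "dyadic_block n d (Suc t) y = ?v - ?c"
    using dyadic_block_eq[OF y] dyadic_block_sibling[OF t] y False by auto
  moreover have "?v \<noteq> {}" "?c \<subseteq> ?v"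
    using dyadic_block_nonempty[OF x] dyadic_block_Suc_subset[OF t] by auto
  ultimately show ?thesis
    by (simp add: branch_gap_def measure_cond_oracle_Diff)
qed

text \<open>Each of the two children contributes its total conditional mass, at most one.\<close>
lemma sum_pmf_cond_oracle_children_le:
  assumes t: "t < d"
  shows "(\<Sum>y\<in>dyadic_block n d t x. pmf (cond_oracle p (dyadic_block n d (Suc t) y)) y) \<le> 2"
proof -
  let ?v = "dyadic_block n d t x" and ?c = "dyadic_block n d (Suc t) x"
  let ?P = "\<lambda>y. pmf (cond_oracle p (dyadic_block n d (Suc t) y)) y"
  have "(\<Sum>y\<in>?c. ?P y) = measure_pmf.prob (cond_oracle p ?c) ?c"
    by (simp add: measure_measure_pmf_finite dyadic_block_eq cong: sum.cong)
  moreover have "(\<Sum>y\<in>?v - ?c. ?P y) = measure_pmf.prob (cond_oracle p (?v - ?c)) (?v - ?c)"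
    by (simp add: measure_measure_pmf_finite) (metis (no_types, lifting) dyadic_block_sibling[OF t] sum.cong)
  moreover have "(\<Sum>y\<in>?v. ?P y) = (\<Sum>y\<in>?c. ?P y) + (\<Sum>y\<in>?v - ?c. ?P y)"
    using sum.subset_diff[OF dyadic_block_Suc_subset[OF t] finite_dyadic_block] by (simp only: add.commute)
  ultimately show ?thesis
    using measure_pmf.prob_le_1[of "cond_oracle p ?c" ?c] measure_pmf.prob_le_1[of "cond_oracle p (?v - ?c)" "?v - ?c"]
    by linarith
qed

lemma sum_weighted_branch_gap_le:
  assumes t: "t < d"
  shows "(\<Sum>y\<in>{1..n}. measure_pmf.prob q (dyadic_block n d t y)
           * pmf (cond_oracle p (dyadic_block n d (Suc t) y)) y * branch_gap n d p q t y)
         \<le> 2 * (\<Sum>x\<in>{1..n}. pmf q x * branch_gap n d p q t x)"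
proof -
  let ?g = "branch_gap n d p q t" and ?P = "\<lambda>y. pmf (cond_oracle p (dyadic_block n d (Suc t) y)) y"
  have "measure_pmf.prob q (dyadic_block n d t y) * ?P y * ?g y
      = (\<Sum>x\<in>dyadic_block n d t y. pmf q x * ?g x * ?P y)" if "y \<in> {1..n}" for y
  proof -
    have "measure_pmf.prob q (dyadic_block n d t y) * ?P y * ?g y
        = (\<Sum>x\<in>dyadic_block n d t y. pmf q x * ?g y * ?P y)"
      unfolding measure_measure_pmf_finite[OF finite_dyadic_block] sum_distrib_right
      by (intro sum.cong refl) (simp add: mult_ac)
    also have "\<dots> = (\<Sum>x\<in>dyadic_block n d t y. pmf q x * ?g x * ?P y)"
      using branch_gap_eq[OF t that, of _ p q] by simp
    finally show ?thesis .
  qed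
  then have "(\<Sum>y\<in>{1..n}. measure_pmf.prob q (dyadic_block n d t y) * ?P y * ?g y)
      = (\<Sum>y\<in>{1..n}. \<Sum>x\<in>dyadic_block n d t y. pmf q x * ?g x * ?P y)"
    by (rule sum.cong[OF refl])
  also have "\<dots> = (\<Sum>x\<in>{1..n}. \<Sum>y\<in>dyadic_block n d t x. pmf q x * ?g x * ?P y)"
    unfolding dyadic_block_def by (subst sum.swap_restrict) (simp_all only: finite_atLeastAtMost eq_commute)
  also have "\<dots> \<le> (\<Sum>x\<in>{1..n}. pmf q x * ?g x * 2)"
    using sum_pmf_cond_oracle_children_le[OF t]
    by (intro sum_mono) (simp add: sum_distrib_left[symmetric] mult_left_mono branch_gap_bounds)
  finally show ?thesis by (simp add: sum_distrib_left mult.commute)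
qed

lemma dTV_le_branch_gaps:
  assumes p: "is_dist_on n p" and q: "is_dist_on n q" and nd: "n \<le> 2 ^ d"
  shows "dTV n p q \<le> (\<Sum>t<d. \<Sum>x\<in>{1..n}. pmf q x * branch_gap n d p q t x)"
proof -
  have "(\<Sum>y\<in>{1..n}. \<bar>pmf p y - pmf q y\<bar>)
      \<le> (\<Sum>t<d. \<Sum>y\<in>{1..n}. measure_pmf.prob q (dyadic_block n d t y)
           * pmf (cond_oracle p (dyadic_block n d (Suc t) y)) y * branch_gap n d p q t y)"
    using abs_pmf_diff_le_branch_gaps[OF p q nd] by (subst sum.swap) (rule sum_mono)
  also have "\<dots> \<le> (\<Sum>t<d. 2 * (\<Sum>x\<in>{1..n}. pmf q x * branch_gap n d p q t x))"
    by (intro sum_mono sum_weighted_branch_gap_le) auto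
  finally show ?thesis by (simp add: dTV_def sum_distrib_left[symmetric])
qed

section \<open>Bucketing\<close>

lemma le_dyadic_staircase:
  fixes x :: real
  assumes "0 \<le> x" "x \<le> 1"
  shows "x \<le> 1 / 2 ^ J + (\<Sum>j\<in>{1..J}. 2 / 2 ^ j * of_bool (1 / 2 ^ j \<le> x))"
proof (induction J)
  case (Suc J)
  show ?case
  proof (cases "x \<ge> 1 / 2 ^ Suc J")
    case True
    then show ?thesis using Suc by (simp add: field_simps)
  next
    case False
    moreover have "0 \<le> (\<Sum>j\<in>{1..J}. 2 / 2 ^ j * of_bool (1 / 2 ^ j \<le> x) :: real)"
      by (intro sum_nonneg) auto
    ultimately show ?thesis by simp
  qed
qed (use assms in simp)

lemma dyadic_bucketing_pmf:
  fixes \<delta> :: "'a \<Rightarrow> real"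
  assumes \<delta>: "\<And>a. a \<in> set_pmf M \<Longrightarrow> 0 \<le> \<delta> a \<and> \<delta> a \<le> 1"
    and mean: "\<mu> \<le> measure_pmf.expectation M \<delta>"
    and J: "J \<ge> 1" "1 / 2 ^ J \<le> \<mu> / 4"
  shows "\<exists>j\<in>{1..J}. measure_pmf.prob M {a. 1 / 2 ^ j \<le> \<delta> a} \<ge> 3 * 2 ^ j * \<mu> / (8 * J)"
proof (rule ccontr)
  define w where "w j = measure_pmf.prob M {a. 1 / 2 ^ j \<le> \<delta> a}" for j :: nat
  define stair :: "'a \<Rightarrow> real" where "stair a = 1 / 2 ^ J + (\<Sum>j\<in>{1..J}. 2 / 2 ^ j * indicator {a. 1 / 2 ^ j \<le> \<delta> a} a)"
    for a
  assume "\<not> ?thesis"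
  then have small: "2 / 2 ^ j * w j < 3 * \<mu> / (4 * J)" if "j \<in> {1..J}" for j
    using that by (auto simp: w_def field_simps not_le)
  have ind: "integrable M (indicator A :: 'a \<Rightarrow> real)" for A
    by (rule integrable_real_indicator) (auto simp: less_top[symmetric])
  have "integrable M \<delta>"
    using \<delta> by (intro measure_pmf.integrable_const_bound[where B = 1]) (auto intro!: AE_pmfI)
  moreover have "integrable M stair"
    unfolding stair_def[abs_def] using ind by auto
  ultimately have "\<mu> \<le> measure_pmf.expectation M stair"
    using mean le_dyadic_staircase[of "\<delta> _" J] \<delta>
    by (elim order.trans, intro integral_mono_AE) (auto intro!: AE_pmfI simp: stair_def indicator_def)
  also have "measure_pmf.expectation M stair = 1 / 2 ^ J + (\<Sum>j\<in>{1..J}. 2 / 2 ^ j * w j)"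
    unfolding stair_def[abs_def] w_def using ind by (simp add: Bochner_Integration.integral_sum)
  also have "(\<Sum>j\<in>{1..J}. 2 / 2 ^ j * w j) < (\<Sum>j\<in>{1..J}. 3 * \<mu> / (4 * J))"
    using J by (intro sum_strict_mono small) auto
  also have "(\<Sum>j\<in>{1..J}. 3 * \<mu> / (4 * J)) = 3 * \<mu> / 4"
    using J by simp
  finally show False using J by linarith
qed
section \<open>Frequency tests\<close>

datatype test = Test
  (test_set: "nat set") (test_target: "nat set") (test_samples: nat)
  (test_expected: real) (test_radius: real)

definition test_passes :: "test \<Rightarrow> nat list \<Rightarrow> bool" where
  "test_passes t ys \<longleftrightarrow>
     \<bar>real (length (filter (\<lambda>y. y \<in> test_target t) ys)) / real (test_samples t) - test_expected t\<bar>
       \<le> test_radius t"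

fun test_queries :: "test list \<Rightarrow> nat set list" where
  "test_queries [] = []"
| "test_queries (t # ts) = replicate (test_samples t) (test_set t) @ test_queries ts"

fun all_tests_pass :: "test list \<Rightarrow> nat list \<Rightarrow> bool" where
  "all_tests_pass [] ys = True"
| "all_tests_pass (t # ts) ys \<longleftrightarrow>
     test_passes t (take (test_samples t) ys) \<and> all_tests_pass ts (drop (test_samples t) ys)"

definition pass_prob :: "nat pmf \<Rightarrow> test \<Rightarrow> real" where
  "pass_prob p t = measure_pmf.prob (replicate_pmf (test_samples t) (cond_oracle p (test_set t)))
     {ys. test_passes t ys}"

definition hit_prob :: "nat pmf \<Rightarrow> test \<Rightarrow> real" where
  "hit_prob p t = measure_pmf.prob (cond_oracle p (test_set t)) (test_target t)"

lemma pass_prob_bounds: "0 \<le> pass_prob p t" "pass_prob p t \<le> 1"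
  by (simp_all add: pass_prob_def)

lemma length_test_queries: "length (test_queries ts) = (\<Sum>t\<leftarrow>ts. test_samples t)"
  by (induction ts) auto

lemma set_test_queries: "set (test_queries ts) = test_set ` {t \<in> set ts. test_samples t > 0}"
  by (induction ts) auto

lemma prob_all_tests_pass:
  "measure_pmf.prob (map_pmf (all_tests_pass ts) (answers p (test_queries ts))) {True}
     = (\<Prod>t\<leftarrow>ts. pass_prob p t)"
proof (induction ts)
  case (Cons t ts)
  let ?P = "map_pmf (test_passes t) (answers p (replicate (test_samples t) (test_set t)))"
  let ?A = "map_pmf (all_tests_pass ts) (answers p (test_queries ts))"
  have "map_pmf (all_tests_pass (t # ts)) (answers p (test_queries (t # ts)))
      = bind_pmf (answers p (replicate (test_samples t) (test_set t)))
          (\<lambda>xs. map_pmf (\<lambda>ys. all_tests_pass (t # ts) (xs @ ys)) (answers p (test_queries ts)))"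
    by (simp add: answers_append map_bind_pmf pmf.map_comp o_def)
  also have "\<dots> = bind_pmf (answers p (replicate (test_samples t) (test_set t)))
          (\<lambda>xs. map_pmf (\<lambda>c. test_passes t xs \<and> c) ?A)"
    by (intro bind_pmf_cong refl) (auto simp: pmf.map_comp o_def dest: length_answers)
  also have "\<dots> = bind_pmf ?P (\<lambda>b. map_pmf (\<lambda>c. b \<and> c) ?A)"
    by (simp add: bind_map_pmf)
  finally have split: "map_pmf (all_tests_pass (t # ts)) (answers p (test_queries (t # ts)))
      = bind_pmf ?P (\<lambda>b. map_pmf (\<lambda>c. b \<and> c) ?A)" .
  have "pmf (bind_pmf ?P (\<lambda>b. map_pmf (\<lambda>c. b \<and> c) ?A)) True
      = (\<integral>b. (if b then pmf ?A True else 0) \<partial>?P)"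
    unfolding pmf_bind by (intro Bochner_Integration.integral_cong refl) (auto simp: pmf_map vimage_def)
  also have "\<dots> = (\<Sum>b\<in>UNIV. (if b then pmf ?A True else 0) * pmf ?P b)"
    by (rule integral_measure_pmf_real) auto
  also have "\<dots> = pass_prob p t * pmf ?A True"
    by (simp add: UNIV_bool pmf_map vimage_def pass_prob_def answers_replicate)
  finally have "pmf (bind_pmf ?P (\<lambda>b. map_pmf (\<lambda>c. b \<and> c) ?A)) True = pass_prob p t * pmf ?A True" .
  then show ?case
    by (simp only: measure_pmf_single split Cons.IH[unfolded measure_pmf_single] list.map prod_list.Cons)
qed simp

lemma pass_prob_binomial:
  "pass_prob p t = measure_pmf.prob (binomial_pmf (test_samples t) (hit_prob p t))
     {c. \<bar>real c / real (test_samples t) - test_expected t\<bar> \<le> test_radius t}"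
proof -
  have "binomial_pmf (test_samples t) (hit_prob p t)
      = map_pmf (\<lambda>ys. length (filter (\<lambda>y. y \<in> test_target t) ys))
          (replicate_pmf (test_samples t) (cond_oracle p (test_set t)))"
    by (simp add: count_replicate_pmf hit_prob_def)
  then show ?thesis
    by (simp add: pass_prob_def test_passes_def vimage_def)
qed

lemma binomial_deviation_bound:
  assumes "k > 0" "a \<in> {0..1}" "e \<ge> 0"
  shows "measure_pmf.prob (binomial_pmf k a) {c. \<bar>real c / real k - a\<bar> \<ge> e} \<le> 2 * exp (-2 * real k * e\<^sup>2)"
proof -
  interpret binomial_distribution k a by unfold_locales (use assms in auto)
  show ?thesis using prob_abs_ge'[OF assms(1) assms(3)] by simp
qed

lemma pass_prob_ge:
  assumes "test_samples t > 0" "test_radius t \<ge> 0" "test_expected t = hit_prob p t"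
  shows "pass_prob p t \<ge> 1 - 2 * exp (-2 * real (test_samples t) * (test_radius t)\<^sup>2)"
proof -
  let ?M = "binomial_pmf (test_samples t) (hit_prob p t)"
  let ?far = "{c. \<bar>real c / real (test_samples t) - hit_prob p t\<bar> \<ge> test_radius t}"
  have "measure_pmf.prob ?M (UNIV - ?far) = 1 - measure_pmf.prob ?M ?far"
    using measure_pmf.prob_compl by auto
  moreover have "measure_pmf.prob ?M (UNIV - ?far) \<le> pass_prob p t"
    unfolding pass_prob_binomial using assms by (intro measure_pmf.finite_measure_mono) auto
  ultimately show ?thesis
    using binomial_deviation_bound[OF assms(1) _ assms(2), of "hit_prob p t"] by (simp add: hit_prob_def)
qed

lemma pass_prob_le:
  assumes "test_samples t > 0" "test_radius t \<ge> 0"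
    and "\<bar>hit_prob p t - test_expected t\<bar> \<ge> 2 * test_radius t"
  shows "pass_prob p t \<le> 2 * exp (-2 * real (test_samples t) * (test_radius t)\<^sup>2)"
proof -
  let ?M = "binomial_pmf (test_samples t) (hit_prob p t)"
  have "pass_prob p t
      \<le> measure_pmf.prob ?M {c. \<bar>real c / real (test_samples t) - hit_prob p t\<bar> \<ge> test_radius t}"
    unfolding pass_prob_binomial using assms by (intro measure_pmf.finite_measure_mono) auto
  then show ?thesis
    using binomial_deviation_bound[OF assms(1) _ assms(2), of "hit_prob p t"] by (simp add: hit_prob_def)
qed

lemma prod_list_map_bounds:
  fixes s :: "'a \<Rightarrow> real"
  assumes "\<And>x. 0 \<le> s x" "\<And>x. s x \<le> 1"
  shows "0 \<le> (\<Prod>x\<leftarrow>xs. s x)" "(\<Prod>x\<leftarrow>xs. s x) \<le> 1"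
  by (induction xs) (auto intro!: mult_le_one simp: assms)

lemma prod_list_ge_one_minus:
  fixes xs :: "real list"
  assumes "\<And>x. x \<in> set xs \<Longrightarrow> 1 - e \<le> x \<and> x \<le> 1" "0 \<le> e" "e \<le> 1"
  shows "prod_list xs \<ge> 1 - real (length xs) * e"
proof -
  have "prod_list xs \<ge> 1 - real (length xs) * e \<and> 0 \<le> prod_list xs \<and> prod_list xs \<le> 1"
    using assms(1)
  proof (induction xs)
    case (Cons x xs)
    then have IH: "prod_list xs \<ge> 1 - real (length xs) * e" "0 \<le> prod_list xs" "prod_list xs \<le> 1"
      and x: "1 - e \<le> x" "x \<le> 1"
      by auto
    have "x * prod_list xs \<ge> (1 - e) * prod_list xs"
      using x IH by (intro mult_right_mono) auto
    moreover have "(1 - e) * prod_list xs \<ge> prod_list xs - e"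
      using IH assms(2) by (simp add: algebra_simps) (metis mult_left_le)
    moreover have "0 \<le> x * prod_list xs" "x * prod_list xs \<le> 1"
      using x IH assms by (auto intro: mult_le_one)
    ultimately show ?case using IH by (simp add: algebra_simps)
  qed simp
  then show ?thesis ..
qed

lemma expectation_prod_replicate_pmf:
  fixes s :: "'a \<Rightarrow> real"
  assumes "\<And>x. 0 \<le> s x" "\<And>x. s x \<le> 1"
  shows "(\<integral>xs. (\<Prod>x\<leftarrow>xs. s x) \<partial>replicate_pmf m D) = (\<integral>x. s x \<partial>D) ^ m"
proof (induction m)
  case (Suc m)
  have abs_le: "\<bar>\<Prod>x\<leftarrow>xs. s x\<bar> \<le> 1" for xs
    using prod_list_map_bounds[of s xs, OF assms] by auto
  have "(\<integral>xs. (\<Prod>x\<leftarrow>xs. s x) \<partial>replicate_pmf (Suc m) D)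
      = (\<integral>x. (\<integral>xs. (\<Prod>y\<leftarrow>xs. s y) \<partial>map_pmf (Cons x) (replicate_pmf m D)) \<partial>D)"
    unfolding replicate_pmf.simps(2) map_pmf_def[symmetric] by (rule integral_bind_pmf_bounded[OF abs_le])
  also have "\<dots> = (\<integral>x. s x * (\<integral>x. s x \<partial>D) ^ m \<partial>D)"
    by (simp add: Suc)
  finally show ?case by simp
qed simp

fun blocks_pmf :: "(nat \<Rightarrow> nat) \<Rightarrow> (nat \<Rightarrow> 'a pmf) \<Rightarrow> nat \<Rightarrow> 'a list pmf" where
  "blocks_pmf m T 0 = return_pmf []"
| "blocks_pmf m T (Suc J) =
     bind_pmf (blocks_pmf m T J) (\<lambda>xs. map_pmf (\<lambda>ys. xs @ ys) (replicate_pmf (m (Suc J)) (T (Suc J))))"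

text \<open>Appending independent \<open>[0, 1]\<close>-valued factors can only decrease a product.\<close>
lemma expectation_prod_blocks_pmf_le:
  fixes s :: "'a \<Rightarrow> real"
  assumes s: "\<And>x. 0 \<le> s x" "\<And>x. s x \<le> 1" and j: "1 \<le> j" "j \<le> J"
  shows "(\<integral>xs. (\<Prod>x\<leftarrow>xs. s x) \<partial>blocks_pmf m T J) \<le> (\<integral>xs. (\<Prod>x\<leftarrow>xs. s x) \<partial>replicate_pmf (m j) (T j))"
  using j
proof (induction J)
  case (Suc J)
  note bounds = prod_list_map_bounds[of s, OF s]
  have abs_le: "\<bar>\<Prod>x\<leftarrow>xs. s x\<bar> \<le> 1" for xs
    using bounds[where xs = xs] by auto
  note int = integrable_measure_pmf_bounded[OF abs_le]
  define c where "c = (\<integral>ys. (\<Prod>x\<leftarrow>ys. s x) \<partial>replicate_pmf (m (Suc J)) (T (Suc J)))"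
  have c: "0 \<le> c" "c \<le> 1"
    unfolding c_def using bounds
    by (auto intro!: integral_nonneg_AE measure_pmf.integral_le_const int AE_pmfI)
  have split: "(\<integral>xs. (\<Prod>x\<leftarrow>xs. s x) \<partial>blocks_pmf m T (Suc J)) = (\<integral>xs. (\<Prod>x\<leftarrow>xs. s x) * c \<partial>blocks_pmf m T J)"
    by (simp add: integral_bind_pmf_bounded[OF abs_le] c_def)
  show ?case
  proof (cases "j = Suc J")
    case True
    have "(\<integral>xs. (\<Prod>x\<leftarrow>xs. s x) * c \<partial>blocks_pmf m T J) \<le> (\<integral>xs. c \<partial>blocks_pmf m T J)"
      using bounds c by (intro integral_mono integrable_mult_left int) (auto intro: mult_left_le_one_le)
    then show ?thesis using split True by (simp add: c_def)
  next
    case False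
    then have "(\<integral>xs. (\<Prod>x\<leftarrow>xs. s x) * c \<partial>blocks_pmf m T J) \<le> (\<integral>xs. (\<Prod>x\<leftarrow>xs. s x) \<partial>blocks_pmf m T J)"
      using bounds c by (intro integral_mono integrable_mult_left int) (auto intro: mult_right_le_one_le)
    with False Suc show ?thesis using split by simp
  qed
qed simp

lemma set_pmf_blocks_pmf:
  "xs \<in> set_pmf (blocks_pmf m T J) \<Longrightarrow> x \<in> set xs \<Longrightarrow> \<exists>j\<in>{1..J}. x \<in> set_pmf (T j)"
  by (induction J arbitrary: xs) (fastforce simp: set_replicate_pmf in_lists_conv_set)+

lemma sum_list_blocks_pmf_le:
  fixes f :: "'a \<Rightarrow> real"
  assumes "xs \<in> set_pmf (blocks_pmf m T J)" "\<And>j x. j \<in> {1..J} \<Longrightarrow> x \<in> set_pmf (T j) \<Longrightarrow> f x \<le> F j"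
  shows "(\<Sum>x\<leftarrow>xs. f x) \<le> (\<Sum>j\<in>{1..J}. real (m j) * F j)"
  using assms
proof (induction J arbitrary: xs)
  case (Suc J)
  then obtain ys zs where xs: "xs = ys @ zs" "ys \<in> set_pmf (blocks_pmf m T J)"
    "length zs = m (Suc J)" "\<forall>z\<in>set zs. z \<in> set_pmf (T (Suc J))"
    by (auto simp: set_replicate_pmf in_lists_conv_set)
  have "(\<Sum>x\<leftarrow>ys. f x) \<le> (\<Sum>j\<in>{1..J}. real (m j) * F j)"
    using Suc xs by auto
  moreover have "(\<Sum>x\<leftarrow>zs. f x) \<le> (\<Sum>x\<leftarrow>zs. F (Suc J))"
    using Suc.prems(2) xs by (intro sum_list_mono) auto
  ultimately show ?case
    using xs by (simp add: sum_list_triv add.commute)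
qed simp

section \<open>Parameters of the tester\<close>

lemma real_nat_ceiling_le: "0 \<le> x \<Longrightarrow> real (nat \<lceil>x\<rceil>) \<le> x + 1"
  by simp

lemma le_two_power_nat_ceiling_log: "0 < x \<Longrightarrow> x \<le> 2 ^ nat \<lceil>log 2 x\<rceil>"
  by (metis less_log_of_power not_le real_nat_ceiling_ge one_less_numeral_iff semiring_norm(76))

definition tree_depth :: "nat \<Rightarrow> nat" where
  "tree_depth n = nat \<lceil>log 2 (real n)\<rceil> + 1"

text \<open>The average branch gap of a distribution at distance \<open>eps\<close> from \<open>q\<close> is at least \<open>level_eps\<close>.\<close>
definition level_eps :: "nat \<Rightarrow> real \<Rightarrow> real" where
  "level_eps n eps = eps / real (tree_depth n)"

text \<open>Scale \<open>j\<close> looks for branch gaps of size about \<open>2^-j\<close>: each test estimates a conditional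
  probability to within \<open>2^-(j+1)\<close>, which by Hoeffding takes \<open>4^j\<close> samples times the logarithm
  of the total number of tests (for the union bound), and bucketing guarantees that some scale
  needs only \<open>2^-j\<close> times \<open>8 num_scales / level_eps\<close> tests.\<close>
definition num_scales :: "nat \<Rightarrow> real \<Rightarrow> nat" where
  "num_scales n eps = nat \<lceil>log 2 (4 / level_eps n eps)\<rceil>"

definition tests_at_scale :: "nat \<Rightarrow> real \<Rightarrow> nat \<Rightarrow> nat" where
  "tests_at_scale n eps j = nat \<lceil>8 * real (num_scales n eps) / (2 ^ j * level_eps n eps)\<rceil>"

definition max_tests :: "nat \<Rightarrow> real \<Rightarrow> nat" where
  "max_tests n eps = num_scales n eps * nat \<lceil>8 * real (num_scales n eps) / level_eps n eps\<rceil>"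

definition samples_at_scale :: "nat \<Rightarrow> real \<Rightarrow> nat \<Rightarrow> nat" where
  "samples_at_scale n eps j = nat \<lceil>2 * 4 ^ j * ln (6 * real (max_tests n eps))\<rceil>"

definition radius_at_scale :: "nat \<Rightarrow> real" where
  "radius_at_scale j = 1 / 2 ^ Suc j"

definition query_scale :: "nat \<Rightarrow> real \<Rightarrow> real" where
  "query_scale n eps = (log 2 (real n + 1))\<^sup>2 / eps\<^sup>2"

lemma ln_query_scale_nonneg: "0 \<le> ln (1 + query_scale n eps)"
  by (simp add: query_scale_def)

lemma query_bound_eq:
  "query_bound C k n eps = C * query_scale n eps * (1 + ln (1 + query_scale n eps)) ^ k"
  by (simp add: query_bound_def query_scale_def Let_def)

lemma tree_depth_bounds:
  assumes "n \<ge> 1"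
  shows "n \<le> 2 ^ tree_depth n" "tree_depth n \<ge> 1" "real (tree_depth n) \<le> 3 * log 2 (real n + 1)"
proof -
  have "real n \<le> 2 ^ nat \<lceil>log 2 (real n)\<rceil>"
    using assms by (intro le_two_power_nat_ceiling_log) simp
  also have "\<dots> \<le> 2 ^ tree_depth n"
    by (simp add: tree_depth_def)
  finally show "n \<le> 2 ^ tree_depth n"
    by (metis of_nat_le_iff of_nat_numeral of_nat_power)
  show "tree_depth n \<ge> 1" by (simp add: tree_depth_def)
  have "log 2 (real n) \<le> log 2 (real n + 1)" "1 \<le> log 2 (real n + 1)"
    using assms by simp_all
  moreover have "real (tree_depth n) \<le> log 2 (real n) + 2"
    using assms by (simp add: tree_depth_def) (metis of_int_ceiling_le_add_one add.commute)
  ultimately show "real (tree_depth n) \<le> 3 * log 2 (real n + 1)"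
    by linarith
qed

lemma tests_at_scale_ge:
  "real (tests_at_scale n eps j) \<ge> 8 * real (num_scales n eps) / (2 ^ j * level_eps n eps)"
  unfolding tests_at_scale_def by (rule real_nat_ceiling_ge)

context
  fixes n :: nat and eps :: real
  assumes n: "n \<ge> 1" and eps: "0 < eps" "eps \<le> 1"
begin

lemma level_eps_bounds: "0 < level_eps n eps" "level_eps n eps \<le> 1"
  using tree_depth_bounds(2)[OF n] eps by (auto simp: level_eps_def field_simps)

lemma inverse_level_eps_le: "1 / level_eps n eps \<le> 3 * log 2 (real n + 1) / eps"
  using tree_depth_bounds(3)[OF n] eps by (simp add: level_eps_def divide_right_mono)

lemma num_scales_bounds:
  "num_scales n eps \<ge> 2" "1 / 2 ^ num_scales n eps \<le> level_eps n eps / 4"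
  "2 ^ num_scales n eps \<le> 8 / level_eps n eps"
proof -
  let ?x = "4 / level_eps n eps"
  have x: "?x \<ge> 4" using level_eps_bounds by (simp add: field_simps)
  have "log 2 ?x \<ge> log 2 4" using x level_eps_bounds by (subst log_le_cancel_iff) auto
  moreover have "log 2 (4::real) = 2" using log_pow_cancel[of 2 2] by simp
  ultimately have lg: "log 2 ?x \<ge> 2" by simp
  then show "num_scales n eps \<ge> 2"
    unfolding num_scales_def using real_nat_ceiling_ge[of "log 2 ?x"] by linarith
  have "?x \<le> 2 ^ num_scales n eps"
    unfolding num_scales_def using level_eps_bounds by (intro le_two_power_nat_ceiling_log) simp
  then show "1 / 2 ^ num_scales n eps \<le> level_eps n eps / 4"
    using level_eps_bounds by (simp add: field_simps)
  have "(2::real) ^ num_scales n eps = 2 powr real (num_scales n eps)"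
    by (simp add: powr_realpow)
  also have "\<dots> \<le> 2 powr (log 2 ?x + 1)"
    unfolding num_scales_def using lg real_nat_ceiling_le[of "log 2 ?x"] by (intro powr_mono) auto
  also have "\<dots> = 8 / level_eps n eps"
    using level_eps_bounds by (simp add: powr_add)
  finally show "2 ^ num_scales n eps \<le> 8 / level_eps n eps" .
qed

lemma max_tests_bounds:
  "max_tests n eps \<ge> 1" "(\<Sum>j\<in>{1..num_scales n eps}. tests_at_scale n eps j) \<le> max_tests n eps"
proof -
  have "8 * real (num_scales n eps) / level_eps n eps > 0"
    using level_eps_bounds num_scales_bounds(1) by auto
  then have "nat \<lceil>8 * real (num_scales n eps) / level_eps n eps\<rceil> \<ge> 1"
    by linarith
  then show "max_tests n eps \<ge> 1"
    using num_scales_bounds(1) by (simp add: max_tests_def)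
  have le: "tests_at_scale n eps j \<le> nat \<lceil>8 * real (num_scales n eps) / level_eps n eps\<rceil>" for j
    unfolding tests_at_scale_def using level_eps_bounds
    by (intro nat_mono ceiling_mono divide_left_mono) auto
  then show "(\<Sum>j\<in>{1..num_scales n eps}. tests_at_scale n eps j) \<le> max_tests n eps"
    using sum_mono[of "{1..num_scales n eps}", OF le] by (simp add: max_tests_def)
qed

lemma samples_at_scale_pos: "samples_at_scale n eps j > 0"
  using max_tests_bounds(1) by (simp add: samples_at_scale_def)

lemma deviation_prob_at_scale:
  "2 * exp (-2 * real (samples_at_scale n eps j) * (radius_at_scale j)\<^sup>2) \<le> 1 / (3 * real (max_tests n eps))"
proof -
  have M: "real (max_tests n eps) \<ge> 1" using max_tests_bounds(1) by simp
  have "2 * 4 ^ j * ln (6 * real (max_tests n eps)) \<le> real (samples_at_scale n eps j)"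
    unfolding samples_at_scale_def by (rule real_nat_ceiling_ge)
  then have "2 * real (samples_at_scale n eps j) * (radius_at_scale j)\<^sup>2
      \<ge> 2 * (2 * 4 ^ j * ln (6 * real (max_tests n eps))) * (radius_at_scale j)\<^sup>2"
    by (intro mult_right_mono) auto
  also have "2 * (2 * 4 ^ j * ln (6 * real (max_tests n eps))) * (radius_at_scale j)\<^sup>2
      = ln (6 * real (max_tests n eps))"
    by (simp add: radius_at_scale_def power2_eq_square field_simps power_mult_distrib[symmetric])
  finally have "-2 * real (samples_at_scale n eps j) * (radius_at_scale j)\<^sup>2 \<le> - ln (6 * real (max_tests n eps))"
    by simp
  then have "exp (-2 * real (samples_at_scale n eps j) * (radius_at_scale j)\<^sup>2)
      \<le> exp (- ln (6 * real (max_tests n eps)))"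
    by simp
  also have "\<dots> = 1 / (6 * real (max_tests n eps))"
    using M by (simp add: exp_minus inverse_eq_divide)
  finally show ?thesis by simp
qed

lemma inverse_level_eps_le_query_scale:
  "1 / level_eps n eps \<le> 3 * (1 + query_scale n eps)"
  "1 / (level_eps n eps)\<^sup>2 \<le> 9 * query_scale n eps"
proof -
  define x where "x = log 2 (real n + 1) / eps"
  have x: "x \<ge> 0" "query_scale n eps = x\<^sup>2"
    using eps n by (simp_all add: x_def query_scale_def power_divide)
  have inv: "1 / level_eps n eps \<le> 3 * x"
    using inverse_level_eps_le by (simp add: x_def)
  have "x \<le> 1 + x\<^sup>2"
    using sum_power2_ge_zero[of "x - 1/2" 0] by (simp add: power2_eq_square algebra_simps)
  then show "1 / level_eps n eps \<le> 3 * (1 + query_scale n eps)"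
    using inv x(2) by simp
  have "1 / (level_eps n eps)\<^sup>2 = (1 / level_eps n eps)\<^sup>2"
    by (simp add: power_divide)
  also have "\<dots> \<le> (3 * x)\<^sup>2"
    using inv level_eps_bounds by (intro power_mono) auto
  finally show "1 / (level_eps n eps)\<^sup>2 \<le> 9 * query_scale n eps"
    using x by (simp add: power_mult_distrib)
qed

lemma ln_inverse_level_eps_le: "ln (1 / level_eps n eps) \<le> 2 + ln (1 + query_scale n eps)"
proof -
  have L: "0 \<le> query_scale n eps" by (simp add: query_scale_def)
  have "ln (1 / level_eps n eps) \<le> ln (3 * (1 + query_scale n eps))"
    using inverse_level_eps_le_query_scale(1) level_eps_bounds L by (subst ln_le_cancel_iff) auto
  also have "\<dots> = ln 3 + ln (1 + query_scale n eps)"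
    using L by (intro ln_mult_pos) auto
  also have "ln (3::real) \<le> 2"
    using ln_le_minus_one[of 3] by simp
  finally show ?thesis by simp
qed

lemma num_scales_le: "real (num_scales n eps) \<le> 9 * (1 + ln (1 + query_scale n eps))"
proof -
  define X where "X = ln (4 / level_eps n eps)"
  have "X = ln 4 + ln (1 / level_eps n eps)"
    using level_eps_bounds by (simp add: X_def ln_div)
  moreover have "ln (4::real) \<le> 3" "0 \<le> ln (4::real)"
    using ln_le_minus_one[of 4] by simp_all
  moreover have "0 \<le> ln (1 / level_eps n eps)"
    using level_eps_bounds by simp
  ultimately have X: "0 \<le> X" "X \<le> 5 + ln (1 + query_scale n eps)"
    using ln_inverse_level_eps_le by linarith+
  have "real (num_scales n eps) \<le> log 2 (4 / level_eps n eps) + 1"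
    unfolding num_scales_def using level_eps_bounds by (intro real_nat_ceiling_le) simp
  also have "log 2 (4 / level_eps n eps) = X / ln 2"
    by (simp add: log_def X_def)
  also have "X / ln 2 \<le> X / (2/3)"
    using ln2_ge_two_thirds X by (intro divide_left_mono) auto
  ultimately show ?thesis
    using X ln_query_scale_nonneg[of n eps] by simp
qed

lemma ln_max_tests_ge: "1 \<le> ln (6 * real (max_tests n eps))"
proof -
  have "exp 1 \<le> 6 * real (max_tests n eps)"
    using exp_le max_tests_bounds(1) by linarith
  then show ?thesis
    using max_tests_bounds(1) by (subst ln_ge_iff) auto
qed

lemma ln_max_tests_le: "ln (6 * real (max_tests n eps)) \<le> 74 * (1 + ln (1 + query_scale n eps))"
proof -
  define J where "J = real (num_scales n eps)"
  have J: "2 \<le> J" and \<mu>: "0 < level_eps n eps" "level_eps n eps \<le> 1"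
    using num_scales_bounds(1) level_eps_bounds by (auto simp: J_def)
  have "real (nat \<lceil>8 * J / level_eps n eps\<rceil>) \<le> 8 * J / level_eps n eps + 1"
    using J \<mu> by (intro real_nat_ceiling_le) simp
  also have "\<dots> \<le> 9 * J * (1 / level_eps n eps)"
    using J \<mu> by (simp add: field_simps)
  finally have ceil: "real (nat \<lceil>8 * J / level_eps n eps\<rceil>) \<le> 9 * J * (1 / level_eps n eps)" .
  have "real (max_tests n eps) = J * real (nat \<lceil>8 * J / level_eps n eps\<rceil>)"
    by (simp only: max_tests_def J_def of_nat_mult)
  also have "\<dots> \<le> J * (9 * J * (1 / level_eps n eps))"
    using ceil J by (intro mult_left_mono) auto
  finally have "6 * real (max_tests n eps) \<le> 6 * (J * (9 * J * (1 / level_eps n eps)))"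
    by simp
  then have "ln (6 * real (max_tests n eps)) \<le> ln (54 * J * J * (1 / level_eps n eps))"
    using max_tests_bounds(1) by (subst ln_le_cancel_iff) (auto simp: mult_ac)
  also have "\<dots> = ln 54 + ln J + ln J + ln (1 / level_eps n eps)"
    using J \<mu> by (simp only: ln_mult) simp_all
  also have "\<dots> \<le> 53 + 2 * J + (2 + ln (1 + query_scale n eps))"
    using ln_le_minus_one[of 54] ln_le_minus_one[of J] J ln_inverse_level_eps_le by simp
  also have "\<dots> \<le> 74 * (1 + ln (1 + query_scale n eps))"
    using num_scales_le ln_query_scale_nonneg[of n eps] by (simp add: J_def)
  finally show ?thesis .
qed

lemma tests_times_samples_le:
  assumes j: "j \<in> {1..num_scales n eps}"
  shows "real (tests_at_scale n eps j) * real (samples_at_scale n eps j)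
    \<le> 384 * real (num_scales n eps) * ln (6 * real (max_tests n eps)) / (level_eps n eps)\<^sup>2"
proof -
  define J \<mu> l where "J = real (num_scales n eps)" and "\<mu> = level_eps n eps"
    and "l = ln (6 * real (max_tests n eps))"
  define x where "x = 8 * J / (2 ^ j * \<mu>)"
  have \<mu>: "0 < \<mu>" "\<mu> \<le> 1" and l: "1 \<le> l" and J: "2 \<le> J"
    using level_eps_bounds ln_max_tests_ge num_scales_bounds(1) by (auto simp: \<mu>_def l_def J_def)
  have "(2::real) ^ j \<le> 2 ^ num_scales n eps"
    using j by (intro power_increasing) auto
  then have "2 ^ j * \<mu> \<le> 2 ^ num_scales n eps * \<mu>"
    using \<mu> by (intro mult_right_mono) auto
  also have "\<dots> \<le> 8"
    using num_scales_bounds(3) \<mu> by (simp add: \<mu>_def le_divide_eq)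
  finally have two_j: "2 ^ j * \<mu> \<le> 8" .
  then have x: "J \<le> x"
    using \<mu> J by (simp add: x_def field_simps)
  have "real (tests_at_scale n eps j) \<le> x + 1"
    unfolding tests_at_scale_def x_def J_def \<mu>_def by (rule real_nat_ceiling_le) (use level_eps_bounds in simp)
  then have "real (tests_at_scale n eps j) \<le> 2 * x"
    using x J by linarith
  have "real (samples_at_scale n eps j) \<le> 2 * 4 ^ j * l + 1"
    unfolding samples_at_scale_def l_def by (rule real_nat_ceiling_le) (use l in \<open>simp add: l_def\<close>)
  moreover have "1 \<le> 4 ^ j * l"
    using mult_mono[of 1 "(4::real) ^ j" 1 l] l by simp
  ultimately have "real (samples_at_scale n eps j) \<le> 3 * 4 ^ j * l"
    by linarith
  with \<open>real (tests_at_scale n eps j) \<le> 2 * x\<close>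
  have "real (tests_at_scale n eps j) * real (samples_at_scale n eps j) \<le> (2 * x) * (3 * 4 ^ j * l)"
    using l by (intro mult_mono) auto
  also have "\<dots> = 48 * J * l * 2 ^ j / \<mu>"
    using \<mu> by (simp add: x_def field_simps power_mult_distrib[symmetric])
  also have "\<dots> \<le> 384 * J * l / \<mu>\<^sup>2"
    using two_j \<mu> l J by (simp add: field_simps power2_eq_square)
  finally show ?thesis by (simp add: J_def \<mu>_def l_def)
qed

lemma total_samples_le:
  "(\<Sum>j\<in>{1..num_scales n eps}. real (tests_at_scale n eps j) * real (samples_at_scale n eps j))
     \<le> query_bound (10 ^ 8) 3 n eps"
proof -
  define J \<mu> l L \<Lambda> where "J = real (num_scales n eps)" and "\<mu> = level_eps n eps"
    and "l = ln (6 * real (max_tests n eps))" and "L = query_scale n eps"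
    and "\<Lambda> = 1 + ln (1 + query_scale n eps)"
  have J: "0 \<le> J" "J \<le> 9 * \<Lambda>" and l: "1 \<le> l" "l \<le> 74 * \<Lambda>" and L: "0 \<le> L" "1 / \<mu>\<^sup>2 \<le> 9 * L"
    using num_scales_le ln_max_tests_ge ln_max_tests_le inverse_level_eps_le_query_scale(2)
    by (auto simp: J_def \<mu>_def l_def L_def \<Lambda>_def query_scale_def)
  have "(\<Sum>j\<in>{1..num_scales n eps}. real (tests_at_scale n eps j) * real (samples_at_scale n eps j))
      \<le> (\<Sum>j\<in>{1..num_scales n eps}. 384 * J * l / \<mu>\<^sup>2)"
    by (intro sum_mono) (simp add: tests_times_samples_le J_def l_def \<mu>_def)
  also have "\<dots> = 384 * J\<^sup>2 * l * (1 / \<mu>\<^sup>2)"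
    by (simp add: J_def power2_eq_square)
  also have "\<dots> \<le> 384 * (9 * \<Lambda>)\<^sup>2 * (74 * \<Lambda>) * (9 * L)"
    using J l L by (intro mult_mono power_mono) auto
  also have "\<dots> \<le> 10 ^ 8 * L * \<Lambda> ^ 3"
    using L J by (simp add: power2_eq_square power3_eq_cube mult_ac)
  finally show ?thesis
    by (simp add: query_bound_eq L_def \<Lambda>_def)
qed

end

section \<open>The tester\<close>

definition test_point_pmf :: "nat \<Rightarrow> nat pmf \<Rightarrow> (nat \<times> nat) pmf" where
  "test_point_pmf n q = pair_pmf (pmf_of_set {..<tree_depth n}) q"

definition dyadic_test :: "nat \<Rightarrow> nat pmf \<Rightarrow> real \<Rightarrow> nat \<Rightarrow> nat \<times> nat \<Rightarrow> test" where
  "dyadic_test n q eps j a =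
     (let d = tree_depth n; S = dyadic_block n d (fst a) (snd a); T = dyadic_block n d (Suc (fst a)) (snd a)
      in Test S T (samples_at_scale n eps j) (measure_pmf.prob (cond_oracle q S) T) (radius_at_scale j))"

definition tester_tests :: "nat \<Rightarrow> nat pmf \<Rightarrow> real \<Rightarrow> test list pmf" where
  "tester_tests n q eps =
     blocks_pmf (tests_at_scale n eps) (\<lambda>j. map_pmf (dyadic_test n q eps j) (test_point_pmf n q)) (num_scales n eps)"

definition tester :: nacond_alg where
  "tester n q eps = map_pmf (\<lambda>ts. (test_queries ts, all_tests_pass ts)) (tester_tests n q eps)"

lemma prob_tester_accepts:
  "measure_pmf.prob (run_alg tester n q eps p) {True}
     = (\<integral>ts. (\<Prod>t\<leftarrow>ts. pass_prob p t) \<partial>tester_tests n q eps)"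
proof -
  have "run_alg tester n q eps p
      = bind_pmf (tester_tests n q eps) (\<lambda>ts. map_pmf (all_tests_pass ts) (answers p (test_queries ts)))"
    by (simp add: run_alg_def tester_def map_pmf_def bind_assoc_pmf bind_return_pmf)
  then show ?thesis
    by (simp add: measure_pmf_single pmf_bind prob_all_tests_pass[unfolded measure_pmf_single])
qed

context
  fixes n :: nat and q :: "nat pmf" and eps :: real
  assumes n: "n \<ge> 1" and q: "is_dist_on n q" and eps: "0 < eps" "eps \<le> 1"
begin

lemma levels_nonempty: "{..<tree_depth n} \<noteq> {}"
proof -
  have "0 \<in> {..<tree_depth n}" using tree_depth_bounds(2)[OF n] by simp
  then show ?thesis by blast
qed

lemma set_pmf_test_point_pmf: "set_pmf (test_point_pmf n q) \<subseteq> {..<tree_depth n} \<times> {1..n}"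
  using q levels_nonempty by (auto simp: test_point_pmf_def is_dist_on_def)

lemma pmf_test_point_pmf: "t < tree_depth n \<Longrightarrow> pmf (test_point_pmf n q) (t, x) = pmf q x / tree_depth n"
  using levels_nonempty by (simp add: test_point_pmf_def pmf_pair)

lemma tester_tests_elem:
  assumes "ts \<in> set_pmf (tester_tests n q eps)" "t \<in> set ts"
  obtains j a where "j \<in> {1..num_scales n eps}" "a \<in> {..<tree_depth n} \<times> {1..n}" "t = dyadic_test n q eps j a"
  using set_pmf_blocks_pmf[OF assms[unfolded tester_tests_def]] set_pmf_test_point_pmf by auto

lemma length_tester_tests:
  assumes "ts \<in> set_pmf (tester_tests n q eps)"
  shows "length ts \<le> max_tests n eps"
proof -
  have "(\<Sum>t\<leftarrow>ts. 1::real) \<le> (\<Sum>j\<in>{1..num_scales n eps}. real (tests_at_scale n eps j) * 1)"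
    using assms unfolding tester_tests_def by (rule sum_list_blocks_pmf_le) simp
  then show ?thesis
    using max_tests_bounds(2)[OF n eps] by (simp add: sum_list_triv of_nat_sum[symmetric] del: of_nat_sum)
qed

lemma length_test_queries_tester_tests:
  assumes "ts \<in> set_pmf (tester_tests n q eps)"
  shows "real (length (test_queries ts)) \<le> query_bound (10 ^ 8) 3 n eps"
proof -
  have "(\<Sum>t\<leftarrow>ts. real (test_samples t))
      \<le> (\<Sum>j\<in>{1..num_scales n eps}. real (tests_at_scale n eps j) * real (samples_at_scale n eps j))"
    using assms unfolding tester_tests_def
    by (rule sum_list_blocks_pmf_le) (auto simp: dyadic_test_def Let_def)
  also have "\<dots> \<le> query_bound (10 ^ 8) 3 n eps"
    by (rule total_samples_le[OF n eps])
  finally have "(\<Sum>t\<leftarrow>ts. real (test_samples t)) \<le> query_bound (10 ^ 8) 3 n eps" .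
  moreover have "real (\<Sum>t\<leftarrow>ts. test_samples t) = (\<Sum>t\<leftarrow>ts. real (test_samples t))"
    by (induction ts) auto
  ultimately show ?thesis
    by (simp add: length_test_queries)
qed

lemma tester_queries_valid:
  assumes "ts \<in> set_pmf (tester_tests n q eps)" "S \<in> set (test_queries ts)"
  shows "S \<noteq> {} \<and> S \<subseteq> {1..n}"
proof -
  obtain t where "t \<in> set ts" "S = test_set t"
    using assms(2) by (auto simp: set_test_queries)
  with assms(1) obtain a where "snd a \<in> {1..n}" "S = dyadic_block n (tree_depth n) (fst a) (snd a)"
    by (elim tester_tests_elem) (auto simp: dyadic_test_def Let_def)
  then show ?thesis
    using dyadic_block_nonempty dyadic_block_subset by blast
qed

lemma tester_queries:
  assumes "(Qs, dec) \<in> set_pmf (tester n q eps)"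
  shows "real (length Qs) \<le> query_bound (10 ^ 8) 3 n eps \<and> (\<forall>S \<in> set Qs. S \<noteq> {} \<and> S \<subseteq> {1..n})"
proof -
  obtain ts where "ts \<in> set_pmf (tester_tests n q eps)" "Qs = test_queries ts"
    using assms by (auto simp: tester_def)
  then show ?thesis
    using length_test_queries_tester_tests tester_queries_valid by blast
qed

lemma tester_completeness: "measure_pmf.prob (run_alg tester n q eps q) {True} \<ge> 2/3"
proof -
  define e where "e = 1 / (3 * real (max_tests n eps))"
  have M: "real (max_tests n eps) \<ge> 1" using max_tests_bounds(1)[OF n eps] by simp
  have e: "0 \<le> e" "e \<le> 1" "real (max_tests n eps) * e = 1/3"
    using M by (auto simp: e_def)
  have pass: "1 - e \<le> pass_prob q t" if "ts \<in> set_pmf (tester_tests n q eps)" "t \<in> set ts" for ts t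
    using that
  proof (rule tester_tests_elem)
    fix j a assume t: "t = dyadic_test n q eps j a"
    have "1 - 2 * exp (-2 * real (test_samples t) * (test_radius t)\<^sup>2) \<le> pass_prob q t"
      by (rule pass_prob_ge) (simp_all add: t dyadic_test_def Let_def hit_prob_def radius_at_scale_def
          samples_at_scale_pos[OF n eps])
    then show ?thesis
      using deviation_prob_at_scale[OF n eps, of j] by (simp add: t dyadic_test_def Let_def e_def)
  qed
  have "2/3 \<le> (\<Prod>t\<leftarrow>ts. pass_prob q t)" if ts: "ts \<in> set_pmf (tester_tests n q eps)" for ts
  proof -
    have "1 - real (length ts) * e \<le> (\<Prod>t\<leftarrow>ts. pass_prob q t)"
      using pass[OF ts] pass_prob_bounds e
      by (intro prod_list_ge_one_minus[of "map (pass_prob q) ts" e, simplified]) auto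
    moreover have "real (length ts) * e \<le> real (max_tests n eps) * e"
      using length_tester_tests[OF ts] e by (intro mult_right_mono) auto
    ultimately show ?thesis using e by linarith
  qed
  moreover have "integrable (tester_tests n q eps) (\<lambda>ts. \<Prod>t\<leftarrow>ts. pass_prob q t)"
    using prod_list_map_bounds[of "pass_prob q", OF pass_prob_bounds]
    by (intro integrable_measure_pmf_bounded[where B = 1]) (simp add: abs_le_iff)
  ultimately show ?thesis
    unfolding prob_tester_accepts by (intro measure_pmf.integral_ge_const) (auto intro!: AE_pmfI)
qed

lemma expected_branch_gap_ge:
  assumes p: "is_dist_on n p" and far: "dTV n p q \<ge> eps"
  shows "level_eps n eps
    \<le> measure_pmf.expectation (test_point_pmf n q) (\<lambda>(t, x). branch_gap n (tree_depth n) p q t x)"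
proof -
  let ?d = "tree_depth n" and ?g = "branch_gap n (tree_depth n) p q"
  have "measure_pmf.expectation (test_point_pmf n q) (\<lambda>(t, x). ?g t x)
      = (\<Sum>a\<in>{..<?d} \<times> {1..n}. (case a of (t, x) \<Rightarrow> ?g t x) * pmf (test_point_pmf n q) a)"
    by (rule integral_measure_pmf_real) (use set_pmf_test_point_pmf in auto)
  also have "\<dots> = (\<Sum>t<?d. \<Sum>x\<in>{1..n}. ?g t x * pmf (test_point_pmf n q) (t, x))"
    by (subst sum.cartesian_product) (simp add: case_prod_beta')
  also have "\<dots> = (\<Sum>t<?d. \<Sum>x\<in>{1..n}. pmf q x * ?g t x) / ?d"
    by (simp add: pmf_test_point_pmf sum_divide_distrib mult_ac)
  finally show ?thesis
    using far dTV_le_branch_gaps[OF p q tree_depth_bounds(1)[OF n]] tree_depth_bounds(2)[OF n]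
    by (simp add: level_eps_def divide_right_mono)
qed

lemma heavy_scale_exists:
  assumes p: "is_dist_on n p" and far: "dTV n p q \<ge> eps"
  shows "\<exists>j\<in>{1..num_scales n eps}. 3 \<le> real (tests_at_scale n eps j)
    * measure_pmf.prob (test_point_pmf n q) {(t, x). 1 / 2 ^ j \<le> branch_gap n (tree_depth n) p q t x}"
proof -
  let ?J = "num_scales n eps" and ?\<mu> = "level_eps n eps"
  obtain j where j: "j \<in> {1..?J}" and heavy:
    "3 * 2 ^ j * ?\<mu> / (8 * ?J) \<le> measure_pmf.prob (test_point_pmf n q)
       {a. 1 / 2 ^ j \<le> (case a of (t, x) \<Rightarrow> branch_gap n (tree_depth n) p q t x)}"
    using dyadic_bucketing_pmf[OF _ expected_branch_gap_ge[OF p far] _ num_scales_bounds(2)[OF n eps]]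
      num_scales_bounds(1)[OF n eps] branch_gap_bounds
    by (auto split: prod.splits)
  have "3 = (8 * ?J / (2 ^ j * ?\<mu>)) * (3 * 2 ^ j * ?\<mu> / (8 * ?J))"
    using level_eps_bounds[OF n eps] num_scales_bounds(1)[OF n eps] by (simp add: field_simps)
  also have "\<dots> \<le> real (tests_at_scale n eps j) * measure_pmf.prob (test_point_pmf n q)
       {a. 1 / 2 ^ j \<le> (case a of (t, x) \<Rightarrow> branch_gap n (tree_depth n) p q t x)}"
    using tests_at_scale_ge[of n eps j] heavy level_eps_bounds[OF n eps]
    by (intro mult_mono) auto
  finally show ?thesis
    using j by (auto simp: case_prod_unfold)
qed

lemma expected_pass_prob_le:
  "measure_pmf.expectation (map_pmf (dyadic_test n q eps j) (test_point_pmf n q)) (pass_prob p)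
    \<le> 1 - 2/3 * measure_pmf.prob (test_point_pmf n q) {(t, x). 1 / 2 ^ j \<le> branch_gap n (tree_depth n) p q t x}"
proof -
  let ?H = "{(t, x). 1 / 2 ^ j \<le> branch_gap n (tree_depth n) p q t x}"
  have "pass_prob p (dyadic_test n q eps j a) \<le> 1 - 2/3 * indicator ?H a" for a
  proof (cases "a \<in> ?H")
    case True
    let ?t = "dyadic_test n q eps j a"
    have "pass_prob p ?t \<le> 2 * exp (-2 * real (test_samples ?t) * (test_radius ?t)\<^sup>2)"
      using True samples_at_scale_pos[OF n eps]
      by (intro pass_prob_le) (auto simp: dyadic_test_def Let_def hit_prob_def branch_gap_def radius_at_scale_def)
    also have "\<dots> \<le> 1 / (3 * real (max_tests n eps))"
      using deviation_prob_at_scale[OF n eps, of j] by (simp add: dyadic_test_def Let_def)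
    also have "\<dots> \<le> 1/3"
      using max_tests_bounds(1)[OF n eps] by (simp add: field_simps)
    finally show ?thesis using True by simp
  qed (simp add: pass_prob_bounds)
  then have "measure_pmf.expectation (test_point_pmf n q) (\<lambda>a. pass_prob p (dyadic_test n q eps j a))
      \<le> measure_pmf.expectation (test_point_pmf n q) (\<lambda>a. 1 - 2/3 * indicator ?H a)"
    using pass_prob_bounds
    by (intro integral_mono integrable_measure_pmf_bounded[where B = 1]) (auto simp: indicator_def)
  also have "\<dots> = 1 - 2/3 * measure_pmf.prob (test_point_pmf n q) ?H"
    by (subst Bochner_Integration.integral_diff)
       (auto simp: less_top[symmetric] measure_pmf.prob_space)
  finally show ?thesis by simp
qed

lemma tester_soundness:
  assumes p: "is_dist_on n p" and far: "dTV n p q \<ge> eps"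
  shows "measure_pmf.prob (run_alg tester n q eps p) {True} \<le> 1/3"
proof -
  obtain j where j: "j \<in> {1..num_scales n eps}" and heavy: "3 \<le> real (tests_at_scale n eps j)
      * measure_pmf.prob (test_point_pmf n q) {(t, x). 1 / 2 ^ j \<le> branch_gap n (tree_depth n) p q t x}"
    using heavy_scale_exists[OF p far] by blast
  define m where "m = tests_at_scale n eps j"
  define w where "w = measure_pmf.prob (test_point_pmf n q) {(t, x). 1 / 2 ^ j \<le> branch_gap n (tree_depth n) p q t x}"
  define E where "E = measure_pmf.expectation (map_pmf (dyadic_test n q eps j) (test_point_pmf n q)) (pass_prob p)"
  have E: "0 \<le> E" "E \<le> 1 - 2/3 * w"
    using expected_pass_prob_le pass_prob_bounds by (auto simp: E_def w_def intro!: integral_nonneg_AE)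
  have "measure_pmf.prob (run_alg tester n q eps p) {True}
      \<le> (\<integral>ts. (\<Prod>t\<leftarrow>ts. pass_prob p t) \<partial>replicate_pmf m (map_pmf (dyadic_test n q eps j) (test_point_pmf n q)))"
    unfolding prob_tester_accepts tester_tests_def m_def
    by (rule expectation_prod_blocks_pmf_le) (use pass_prob_bounds j in auto)
  also have "\<dots> = E ^ m"
    unfolding E_def by (rule expectation_prod_replicate_pmf) (simp_all add: pass_prob_bounds)
  also have "\<dots> \<le> exp (- (2/3 * w)) ^ m"
    using E exp_ge_add_one_self[of "- (2/3 * w)"] by (intro power_mono) auto
  also have "\<dots> = exp (- 2/3 * (real m * w))"
    by (simp add: exp_of_nat_mult[symmetric] mult_ac)
  also have "\<dots> \<le> exp (- 2)"
    using heavy by (simp add: m_def w_def)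
  also have "\<dots> \<le> 1/3"
    using exp_ge_add_one_self[of 2] by (simp add: exp_minus field_simps)
  finally show ?thesis .
qed

end

theorem theorem3:
  shows "\<exists>(A :: nacond_alg) (C :: real) (k :: nat).
    \<forall>n q eps. n \<ge> 1 \<and> is_dist_on n q \<and> 0 < eps \<and> eps \<le> 1 \<longrightarrow>
      (\<forall>(Qs, dec) \<in> set_pmf (A n q eps).
          real (length Qs) \<le> query_bound C k n eps
          \<and> (\<forall>S \<in> set Qs. S \<noteq> {} \<and> S \<subseteq> {1..n}))
      \<and> (\<forall>p. is_dist_on n p \<longrightarrow>
           (p = q \<longrightarrow> measure_pmf.prob (run_alg A n q eps p) {True} \<ge> 2/3)
         \<and> (dTV n p q \<ge> eps \<longrightarrow> measure_pmf.prob (run_alg A n q eps p) {False} \<ge> 2/3))"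
proof (intro exI[of _ tester] exI[of _ "10 ^ 8 :: real"] exI[of _ "3 :: nat"] allI impI conjI)
  fix n :: nat and q :: "nat pmf" and eps :: real
  assume "n \<ge> 1 \<and> is_dist_on n q \<and> 0 < eps \<and> eps \<le> 1"
  then show "\<forall>(Qs, dec) \<in> set_pmf (tester n q eps). real (length Qs) \<le> query_bound (10 ^ 8) 3 n eps
      \<and> (\<forall>S \<in> set Qs. S \<noteq> {} \<and> S \<subseteq> {1..n})"
    by clarify (blast dest: tester_queries)
next
  fix n :: nat and q p :: "nat pmf" and eps :: real
  assume "n \<ge> 1 \<and> is_dist_on n q \<and> 0 < eps \<and> eps \<le> 1" "is_dist_on n p" "p = q"
  then show "measure_pmf.prob (run_alg tester n q eps p) {True} \<ge> 2/3"
    using tester_completeness by auto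
next
  fix n :: nat and q p :: "nat pmf" and eps :: real
  assume "n \<ge> 1 \<and> is_dist_on n q \<and> 0 < eps \<and> eps \<le> 1" "is_dist_on n p" "dTV n p q \<ge> eps"
  then show "measure_pmf.prob (run_alg tester n q eps p) {False} \<ge> 2/3"
    using tester_soundness by (auto simp: measure_pmf_single pmf_False_conv_True)
qed

end
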